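(* Let $m,n$ be positive integers and let $\tau=1^m\text{-}1^m\text{-}\cdots\text{-}1^m$ be the pattern consisting of $n$ runs of $m$ ones separated by $n-1$ dashes. Let $H(x,u,v)=\sum_{\phi}x^{\mathrm{len}(\phi)}u^{\mathrm{parts}(\phi)}v^{\mathrm{fst}(\phi)}$, the sum over all factorizations $\phi$ on the one-letter alphabet $\{1\}$ (including the empty factorization) that avoid $\tau$. Then \[ H(x,u,v)=1+\left[\frac{1-x}{(1-vx)(1-x-ux)}\right]\left[u(vx-(vx)^{mn})+\frac{u^2x^m\left((1-vx)(z-(vx)^m)z^{n-1}-(1-(vx)^m)(z^n-(vx)^{mn})\right)}{(z-(vx)^m)(1-x-u(x-x^m))}\right], \] where \[ z=x^m+\frac{ux^m(1-x^m)}{1-x-u(x-x^m)}. \]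
   Context: A factorization on $\{1\}$ is an ordered list $(\phi_1)\cdots(\phi_k)$ of nonempty words $\phi_j=1^{c_j}$; $\mathrm{parts}(\phi)=k$, $\mathrm{len}(\phi)=c_1+\cdots+c_k$, and $\mathrm{fst}(\phi)=c_1$ is the length of the first part ($\mathrm{fst}(\emptyset)=0$). A factorization $\phi$ contains $\tau$ if the word obtained from $\phi$ by inserting a single letter $0$ between each pair of adjacent parts contains $\tau$ by an occurrence not using the letter $0$; here a word contains $1^{m}\text{-}\cdots\text{-}1^{m}$ ($n$ runs) if it has $nm$ occurrences of the same letter at positions $i_1<\cdots<i_{nm}$ such that positions within each consecutive block of $m$ of them are consecutive in the word. Equivalently, $\phi$ contains $\tau$ iff one can choose $n$ disjoint runs of $m$ consecutive ones, each lying within a single part. Otherwise $\phi$ avoids $\tau$. *)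

theory Defs
  imports "HOL-Analysis.Analysis"
begin

text \<open>A factorization on the one-letter alphabet {1} is represented by the list
  [c_1, ..., c_k] of the lengths of its parts (all positive); the empty list is the
  empty factorization.\<close>

definition is_factorization :: "nat list \<Rightarrow> bool" where
  "is_factorization cs \<longleftrightarrow> (\<forall>c\<in>set cs. 0 < c)"

definition parts :: "nat list \<Rightarrow> nat" where
  "parts cs = length cs"

definition len :: "nat list \<Rightarrow> nat" where
  "len cs = sum_list cs"

definition fst_part :: "nat list \<Rightarrow> nat" where
  "fst_part cs = (if cs = [] then 0 else hd cs)"

text \<open>A run of m consecutive ones inside a single part is given by a pair (j, s):
  part index j (0-based) and starting offset s (0-based) within part j, occupying
  positions s, ..., s+m-1 of that part.  The factorization contains the pattern
  1^m-1^m-...-1^m (n runs) iff one can choose n pairwise disjoint such runs.\<close>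

definition contains_runs :: "nat \<Rightarrow> nat \<Rightarrow> nat list \<Rightarrow> bool" where
  "contains_runs m n cs \<longleftrightarrow>
     (\<exists>R :: (nat \<times> nat) set. finite R \<and> card R = n \<and>
        (\<forall>(j, s)\<in>R. j < length cs \<and> s + m \<le> cs ! j) \<and>
        (\<forall>(j, s)\<in>R. \<forall>(j', s')\<in>R. (j, s) \<noteq> (j', s') \<longrightarrow>
            j \<noteq> j' \<or> s + m \<le> s' \<or> s' + m \<le> s))"

definition avoids_runs :: "nat \<Rightarrow> nat \<Rightarrow> nat list \<Rightarrow> bool" where
  "avoids_runs m n cs \<longleftrightarrow> \<not> contains_runs m n cs"

end

theory Submission
  imports Defs
begin

text \<open>A part of length c can host exactly c div m disjoint runs of m ones, so a factorization
  avoids the pattern iff its run capacity, the sum of the c_j div m, is less than n. Let s_N be the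
  generating function at v = 1 of the factorizations of capacity less than N. Removing the first
  part c lowers the capacity bound by c div m; grouping first parts by c div m gives the convolution
  recurrence s_N = 1 + u ((1 - x^m) / (1 - x) * (SUM q<N. x^(m q) s_(N-q)) - s_N), which amounts to
  an affine first order recurrence with ratio z, so s_N = P + D z^(N-1). The same decomposition,
  with the first part weighted by (v x)^c, writes H as a geometric convolution of the s_(n-q), which
  is summed in closed form. All series converge absolutely for |x| <= 1/4, since there are
  2^(L-1) factorizations of length L.\<close>

definition run_capacity :: "nat \<Rightarrow> nat list \<Rightarrow> nat" where
  "run_capacity m cs = (\<Sum>c\<leftarrow>cs. c div m)"

lemma run_capacity_conv_sum_nth: "run_capacity m cs = (\<Sum>j<length cs. cs ! j div m)"
  unfolding run_capacity_def by (simp add: sum_list_sum_nth atLeast0LessThan)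

lemma contains_runs_if_le_run_capacity:
  assumes m: "0 < m" and n: "n \<le> run_capacity m cs"
  shows "contains_runs m n cs"
proof -
  define blocks where "blocks = (\<Union>j<length cs. (\<lambda>i. (j, i * m)) ` {..<cs ! j div m})"
  have "card blocks = (\<Sum>j<length cs. card ((\<lambda>i. (j, i * m)) ` {..<cs ! j div m}))"
    unfolding blocks_def by (rule card_UN_disjoint) auto
  also have "\<dots> = run_capacity m cs"
    by (simp add: run_capacity_conv_sum_nth card_image inj_on_def m)
  finally obtain R where R: "R \<subseteq> blocks" "card R = n" "finite R"
    using obtain_subset_with_card_n[of n blocks] n by auto
  have in_R: "\<exists>i. s = i * m \<and> j < length cs \<and> i < cs ! j div m" if "(j, s) \<in> R" for j s
    using R(1) that unfolding blocks_def by blast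
  have fits: "i * m + m \<le> c" if "i < c div m" for i c :: nat
    using that by (metis add.commute div_times_less_eq_dividend le_trans less_eq_Suc_le mult_Suc mult_le_mono1)
  have apart: "i * m + m \<le> i' * m" if "i < i'" for i i' :: nat
    using that by (metis Suc_leI add.commute mult_Suc mult_le_mono1)
  have apart_runs: "j \<noteq> j' \<or> s + m \<le> s' \<or> s' + m \<le> s"
    if runs: "(j, s) \<in> R" "(j', s') \<in> R" "(j, s) \<noteq> (j', s')" for j s j' s'
  proof -
    obtain i i' where "s = i * m" "s' = i' * m"
      using in_R runs by blast
    with runs apart[of i i'] apart[of i' i] show ?thesis
      by (cases i i' rule: linorder_cases) auto
  qed
  show ?thesis
    unfolding contains_runs_def
  proof (intro exI conjI)
    show "\<forall>(j, s)\<in>R. j < length cs \<and> s + m \<le> cs ! j"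
      using in_R fits by blast
    show "\<forall>(j, s)\<in>R. \<forall>(j', s')\<in>R. (j, s) \<noteq> (j', s') \<longrightarrow> j \<noteq> j' \<or> s + m \<le> s' \<or> s' + m \<le> s"
      using apart_runs by fast
  qed (use R in auto)
qed

lemma le_run_capacity_if_contains_runs:
  assumes m: "0 < m" and "contains_runs m n cs"
  shows "n \<le> run_capacity m cs"
proof -
  obtain R where fin: "finite R" and card: "card R = n"
    and inside: "\<forall>(j, s)\<in>R. j < length cs \<and> s + m \<le> cs ! j"
    and disj: "\<forall>(j, s)\<in>R. \<forall>(j', s')\<in>R. (j, s) \<noteq> (j', s') \<longrightarrow> j \<noteq> j' \<or> s + m \<le> s' \<or> s' + m \<le> s"
    using assms(2) unfolding contains_runs_def by blast
  define starts where "starts j = {s. (j, s) \<in> R}" for j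
  have R_eq: "R = (\<Union>j<length cs. Pair j ` starts j)"
    using inside unfolding starts_def by auto
  have fin_starts: "finite (starts j)" for j
  proof -
    have "starts j \<subseteq> snd ` R" unfolding starts_def by force
    then show ?thesis using fin finite_subset by blast
  qed
  have starts_le: "card (starts j) \<le> cs ! j div m" for j
  proof -
    have "card (\<Union>s\<in>starts j. {s..<s + m}) = (\<Sum>s\<in>starts j. card {s..<s + m})"
    proof (rule card_UN_disjoint)
      show "\<forall>a\<in>starts j. \<forall>b\<in>starts j. a \<noteq> b \<longrightarrow> {a..<a + m} \<inter> {b..<b + m} = {}"
      proof (intro ballI impI)
        fix a b assume "a \<in> starts j" "b \<in> starts j" "a \<noteq> b"
        then have "a + m \<le> b \<or> b + m \<le> a" using disj unfolding starts_def by fastforce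
        then show "{a..<a + m} \<inter> {b..<b + m} = {}" by auto
      qed
    qed (auto simp: fin_starts)
    then have "card (starts j) * m = card (\<Union>s\<in>starts j. {s..<s + m})" by simp
    also have "\<dots> \<le> card {..<cs ! j}"
      using inside unfolding starts_def by (intro card_mono) auto
    finally show ?thesis by (simp add: m less_eq_div_iff_mult_less_eq)
  qed
  have "card R = (\<Sum>j<length cs. card (Pair j ` starts j))"
    by (subst R_eq, rule card_UN_disjoint) (auto simp: fin_starts)
  also have "\<dots> \<le> run_capacity m cs"
    unfolding run_capacity_conv_sum_nth by (intro sum_mono) (simp add: card_image inj_on_def starts_le)
  finally show ?thesis using card by simp
qed

lemma avoids_runs_iff_run_capacity_less:
  "0 < m \<Longrightarrow> avoids_runs m n cs \<longleftrightarrow> run_capacity m cs < n"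
  unfolding avoids_runs_def
  using contains_runs_if_le_run_capacity le_run_capacity_if_contains_runs not_le by blast

definition bounded_factorizations :: "nat \<Rightarrow> nat list set" where
  "bounded_factorizations L = {cs. is_factorization cs \<and> len cs \<le> L}"

lemma length_le_len: "is_factorization cs \<Longrightarrow> length cs \<le> len cs"
  by (induction cs) (auto simp: is_factorization_def len_def)

lemma finite_bounded_factorizations: "finite (bounded_factorizations L)"
proof (rule finite_subset)
  show "bounded_factorizations L \<subseteq> {cs. set cs \<subseteq> {..L} \<and> length cs \<le> L}"
    using length_le_len member_le_sum_list
    by (fastforce simp: bounded_factorizations_def len_def)
qed (rule finite_lists_length_le[OF finite_atMost])

lemma bounded_factorizations_first_part:
  "bounded_factorizations L = insert [] (\<Union>c\<in>{1..L}. Cons c ` bounded_factorizations (L - c))"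
proof (rule set_eqI)
  fix cs
  show "cs \<in> bounded_factorizations L \<longleftrightarrow>
        cs \<in> insert [] (\<Union>c\<in>{1..L}. Cons c ` bounded_factorizations (L - c))"
    by (cases cs) (fastforce simp: bounded_factorizations_def is_factorization_def len_def)+
qed

lemma sum_power_atLeast1_le_third:
  fixes y :: real
  assumes "0 \<le> y" "y \<le> 1/4"
  shows "(\<Sum>c\<in>{1..L}. y ^ c) \<le> 1/3"
proof (cases "L = 0")
  case False
  then have "(1 - y) * (\<Sum>c\<in>{1..L}. y ^ c) = y - y ^ Suc L"
    using sum_gp_multiplied[of 1 L y] by simp
  also have "\<dots> \<le> y"
    using assms by simp
  also have "\<dots> \<le> (1 - y) * (1/3)"
    using assms by simp
  finally show ?thesis using assms by simp
qed simp

lemma sum_bounded_factorizations_le_2: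
  fixes y :: real
  assumes y: "0 \<le> y" "y \<le> 1/4"
  shows "(\<Sum>cs\<in>bounded_factorizations L. y ^ len cs) \<le> 2"
proof (induction L rule: less_induct)
  case (less L)
  let ?S = "\<lambda>L. \<Sum>cs\<in>bounded_factorizations L. y ^ len cs"
  have "?S L = 1 + (\<Sum>cs\<in>(\<Union>c\<in>{1..L}. Cons c ` bounded_factorizations (L - c)). y ^ len cs)"
    by (subst bounded_factorizations_first_part, subst sum.insert)
      (auto simp: finite_bounded_factorizations len_def)
  also have "\<dots> = 1 + (\<Sum>c\<in>{1..L}. \<Sum>cs\<in>Cons c ` bounded_factorizations (L - c). y ^ len cs)"
    by (subst sum.UNION_disjoint) (auto simp: finite_bounded_factorizations)
  also have "\<dots> = 1 + (\<Sum>c\<in>{1..L}. y ^ c * ?S (L - c))"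
    by (simp add: sum.reindex sum_distrib_left len_def power_add)
  also have "\<dots> \<le> 1 + (\<Sum>c\<in>{1..L}. y ^ c * 2)"
    using y by (intro add_left_mono sum_mono mult_left_mono less.IH) auto
  also have "\<dots> \<le> 1 + 2 * (1/3)"
    using sum_power_atLeast1_le_third[OF y, of L] by (simp add: sum_distrib_right[symmetric])
  finally show ?case by simp
qed

lemma summable_on_factorizations_power_len:
  fixes y :: real
  assumes y: "0 \<le> y" "y \<le> 1/4"
  shows "(\<lambda>cs. y ^ len cs) summable_on {cs. is_factorization cs}"
proof (rule nonneg_bdd_above_summable_on)
  show "bdd_above (sum (\<lambda>cs. y ^ len cs) ` {F. F \<subseteq> {cs. is_factorization cs} \<and> finite F})"
  proof (rule bdd_aboveI[of _ 2], clarify)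
    fix F assume F: "F \<subseteq> {cs. is_factorization cs}" "finite F"
    then have "F \<subseteq> bounded_factorizations (\<Sum>cs\<in>F. len cs)"
      using member_le_sum[of _ F len] by (auto simp: bounded_factorizations_def)
    then have "(\<Sum>cs\<in>F. y ^ len cs) \<le> (\<Sum>cs\<in>bounded_factorizations (\<Sum>cs\<in>F. len cs). y ^ len cs)"
      using y by (intro sum_mono2 finite_bounded_factorizations) auto
    then show "(\<Sum>cs\<in>F. y ^ len cs) \<le> 2"
      using sum_bounded_factorizations_le_2[OF y] by (meson order_trans)
  qed
qed (use y in auto)

definition factorization_weight :: "real \<Rightarrow> real \<Rightarrow> real \<Rightarrow> nat list \<Rightarrow> real" where
  "factorization_weight x u v cs = x ^ len cs * u ^ parts cs * v ^ fst_part cs"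

lemma factorization_weight_Nil [simp]: "factorization_weight x u v [] = 1"
  by (simp add: factorization_weight_def len_def parts_def fst_part_def)

lemma factorization_weight_Cons:
  "factorization_weight x u v (c # cs) = u * (v * x) ^ c * factorization_weight x u 1 cs"
  by (simp add: factorization_weight_def len_def parts_def fst_part_def power_add power_mult_distrib)

lemma summable_on_factorization_weight:
  assumes "\<bar>x\<bar> \<le> 1/4" "\<bar>u\<bar> \<le> 1" "\<bar>v\<bar> \<le> 1"
  shows "factorization_weight x u v summable_on {cs. is_factorization cs}"
proof (rule abs_summable_summable, rule summable_on_comparison_test)
  show "(\<lambda>cs. \<bar>x\<bar> ^ len cs) summable_on {cs. is_factorization cs}"
    using assms by (intro summable_on_factorizations_power_len) auto
  show "norm (factorization_weight x u v cs) \<le> \<bar>x\<bar> ^ len cs" for cs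
  proof -
    have "\<bar>u\<bar> ^ parts cs * \<bar>v\<bar> ^ fst_part cs \<le> 1"
      using assms by (intro mult_le_one power_le_one) auto
    then show ?thesis
      by (simp add: factorization_weight_def abs_mult power_abs mult.assoc mult_left_le)
  qed
qed simp

lemma sum_power_mult_div_blocks:
  fixes t :: "'a::comm_semiring_1" and g :: "nat \<Rightarrow> 'a"
  shows "(\<Sum>c<N * m. t ^ c * g (c div m)) = (\<Sum>r<m. t ^ r) * (\<Sum>q<N. (t ^ m) ^ q * g q)"
proof (cases "m = 0")
  case False
  have "(\<Sum>c<N * m. t ^ c * g (c div m)) = (\<Sum>q<N. \<Sum>c\<in>{q * m..<q * m + m}. t ^ c * g (c div m))"
    by (simp add: sum.nat_group)
  also have "\<dots> = (\<Sum>q<N. \<Sum>r<m. t ^ r * (t ^ m) ^ q * g q)"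
  proof (rule sum.cong[OF refl])
    fix q
    have "(\<Sum>c\<in>{q * m..<q * m + m}. t ^ c * g (c div m)) = (\<Sum>r<m. t ^ (r + q * m) * g ((r + q * m) div m))"
      by (simp add: sum.shift_bounds_nat_ivl[of _ 0 "q * m" m, simplified] atLeast0LessThan add.commute)
    also have "\<dots> = (\<Sum>r<m. t ^ r * (t ^ m) ^ q * g q)"
      using False by (simp add: power_add power_mult mult.commute)
    finally show "(\<Sum>c\<in>{q * m..<q * m + m}. t ^ c * g (c div m)) = (\<Sum>r<m. t ^ r * (t ^ m) ^ q * g q)" .
  qed
  also have "\<dots> = (\<Sum>r<m. t ^ r) * (\<Sum>q<N. (t ^ m) ^ q * g q)"
    by (simp add: sum_distrib_left sum_distrib_right mult_ac)
  finally show ?thesis .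
qed simp

lemma convolution_Suc:
  fixes s :: "nat \<Rightarrow> 'a::comm_semiring_1"
  shows "(\<Sum>q<Suc N. w ^ q * s (Suc N - q)) = s (Suc N) + w * (\<Sum>q<N. w ^ q * s (N - q))"
  by (subst sum.lessThan_Suc_shift) (simp add: sum_distrib_left mult_ac del: sum.lessThan_Suc)

lemma convolution_recurrence_step:
  fixes s :: "nat \<Rightarrow> real" and x u X :: real
  assumes rec: "\<And>N. 0 < N \<Longrightarrow> s N = 1 + u * ((1 - X) / (1 - x) * (\<Sum>q<N. X ^ q * s (N - q)) - s N)"
    and x: "1 - x \<noteq> 0" and N: "0 < N"
  shows "s (Suc N) * ((1 - x - u * (x - X)) / (1 - x)) = 1 - X + X * (1 + u) * s N"
proof -
  define G where "G = (1 - X) / (1 - x)"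
  define C where "C = (\<Sum>q<N. X ^ q * s (N - q))"
  have "u * G * C = s N - 1 + u * s N"
    using rec[OF N] unfolding G_def C_def by (simp add: algebra_simps)
  \<comment> \<open>X times the recurrence at N eliminates the convolution from the one at N + 1\<close>
  then have uGXC: "u * G * (X * C) = X * (s N - 1 + u * s N)"
    by (metis mult.left_commute)
  have "s (Suc N) = 1 + u * (G * (s (Suc N) + X * C) - s (Suc N))"
    using rec[of "Suc N"] unfolding G_def C_def by (simp only: convolution_Suc)
  then have "s (Suc N) * (1 + u - u * G) = 1 - X + X * (1 + u) * s N"
    using uGXC by (simp add: algebra_simps)
  moreover have "1 + u - u * G = (1 - x - u * (x - X)) / (1 - x)"
    using x unfolding G_def by (simp add: field_simps)
  ultimately show ?thesis
    by simp
qed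

lemma affine_step_closed_form:
  fixes x u X D Z :: real
  defines "r \<equiv> 1 - x - u * (x - X)" and "p \<equiv> 1 - x - u * x"
  defines "z \<equiv> X + u * X * (1 - X) / r"
  assumes x: "1 - x \<noteq> 0" and r: "r \<noteq> 0" and p: "p \<noteq> 0"
  shows "(1 - x) / r * (1 - X + X * (1 + u) * ((1 - x) / p + D * Z)) = (1 - x) / p + D * (z * Z)"
proof -
  have z_eq: "(1 - x) / r * (X * (1 + u)) = z"
    using x r unfolding z_def r_def by (simp add: field_simps)
  have fixed_point: "(1 - x) / r * (1 - X) + z * ((1 - x) / p) = (1 - x) / p"
  proof -
    have "(1 - x) / r * (1 - X) + z * ((1 - x) / p)
        = (1 - x) / (r * p) * ((1 - X) * p + X * (1 + u) * (1 - x))"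
      using r p unfolding z_eq[symmetric] by (simp add: field_simps)
    also have "(1 - X) * p + X * (1 + u) * (1 - x) = r"
      unfolding r_def p_def by (simp add: algebra_simps)
    finally show ?thesis using r by simp
  qed
  have "(1 - x) / r * (1 - X + X * (1 + u) * ((1 - x) / p + D * Z))
      = (1 - x) / r * (1 - X) + (1 - x) / r * (X * (1 + u)) * ((1 - x) / p + D * Z)"
    by (subst distrib_left) (simp only: mult.assoc)
  also have "\<dots> = ((1 - x) / r * (1 - X) + z * ((1 - x) / p)) + D * (z * Z)"
    unfolding z_eq by (simp add: algebra_simps)
  finally show ?thesis unfolding fixed_point .
qed

lemma recurrence_closed_form:
  fixes s :: "nat \<Rightarrow> real" and x u X :: real
  defines "r \<equiv> 1 - x - u * (x - X)" and "p \<equiv> 1 - x - u * x"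
  defines "z \<equiv> X + u * X * (1 - X) / r"
  assumes rec: "\<And>N. 0 < N \<Longrightarrow> s N = 1 + u * ((1 - X) / (1 - x) * (\<Sum>q<N. X ^ q * s (N - q)) - s N)"
    and x: "1 - x \<noteq> 0" and r: "r \<noteq> 0" and p: "p \<noteq> 0" and N: "0 < N"
  shows "s N = (1 - x) / p + ((1 - x) / r - (1 - x) / p) * z ^ (N - 1)"
  using N
proof (induction N rule: nat_induct_non_zero)
  case 1
  have "s 1 * (r / (1 - x)) = 1"
    using rec[of 1] x unfolding r_def by (simp add: field_simps)
  then show ?case
    using x r by (simp add: field_simps)
next
  case (Suc N)
  have "s (Suc N) = (1 - x) / r * (1 - X + X * (1 + u) * s N)"
    using convolution_recurrence_step[OF rec x Suc.hyps] x r unfolding r_def by (simp add: field_simps)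
  also have "\<dots> = (1 - x) / p + ((1 - x) / r - (1 - x) / p) * (z * z ^ (N - 1))"
    unfolding Suc.IH r_def p_def z_def using x r p unfolding r_def p_def by (rule affine_step_closed_form)
  also have "z * z ^ (N - 1) = z ^ (Suc N - 1)"
    using Suc.hyps by (cases N) auto
  finally show ?case .
qed

lemma convolution_closed_form:
  fixes s :: "nat \<Rightarrow> real"
  assumes s: "\<And>N. 0 < N \<Longrightarrow> s N = P + D * z ^ (N - 1)" and w: "w \<noteq> 1" and zw: "z \<noteq> w"
  shows "(\<Sum>q<N. w ^ q * s (N - q)) = P * (1 - w ^ N) / (1 - w) + D * (z ^ N - w ^ N) / (z - w)"
proof (induction N)
  case (Suc N)
  have geometric: "P + w * (P * (1 - W) / (1 - w)) = P * (1 - w * W) / (1 - w)" for W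
    using w by (simp add: field_simps)
  have shifted: "D * Z + w * (D * (Z - W) / (z - w)) = D * (z * Z - w * W) / (z - w)" for Z W
    using zw by (simp add: field_simps)
  have step: "P + D * Z + w * (P * (1 - W) / (1 - w) + D * (Z - W) / (z - w))
      = P * (1 - w * W) / (1 - w) + D * (z * Z - w * W) / (z - w)" for Z W
    unfolding geometric[symmetric] shifted[symmetric] by (simp add: distrib_left)
  show ?case
    unfolding convolution_Suc Suc.IH s[OF zero_less_Suc] by (simp add: step)
qed simp

lemma closed_form_regroup:
  fixes a c d p r u X y z Z W :: real
  assumes "1 - y \<noteq> 0" "c \<noteq> 0" "d \<noteq> 0" "p \<noteq> 0" "r \<noteq> 0"
  shows "1 + u * (c / (1 - y) * (a / p * (1 - W) / c + - (a * u * X) / (r * p) * (z * Z - W) / d)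
        - (a / p + - (a * u * X) / (r * p) * Z))
    = 1 + a / ((1 - y) * p) * (u * (y - W) + u ^ 2 * X * ((1 - y) * d * Z - c * (z * Z - W)) / (d * r))"
  using assms by (simp add: field_simps power2_eq_square)

definition avoiding :: "nat \<Rightarrow> nat \<Rightarrow> nat list set" where
  "avoiding m N = {cs. is_factorization cs \<and> run_capacity m cs < N}"

lemma avoiding_subset_factorizations: "avoiding m N \<subseteq> {cs. is_factorization cs}"
  unfolding avoiding_def by auto

lemma avoiding_first_part:
  assumes m: "0 < m" and N: "0 < N"
  shows "avoiding m N = insert [] (\<Union>c\<in>{1..<N * m}. Cons c ` avoiding m (N - c div m))"
proof (rule set_eqI)
  fix cs
  show "cs \<in> avoiding m N \<longleftrightarrow> cs \<in> insert [] (\<Union>c\<in>{1..<N * m}. Cons c ` avoiding m (N - c div m))"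
  proof (cases cs)
    case Nil
    then show ?thesis using N by (simp add: avoiding_def is_factorization_def run_capacity_def)
  next
    case (Cons c r)
    have "cs \<in> avoiding m N \<longleftrightarrow> 0 < c \<and> is_factorization r \<and> c div m + run_capacity m r < N"
      by (simp add: Cons avoiding_def is_factorization_def run_capacity_def)
    also have "\<dots> \<longleftrightarrow> c \<in> {1..<N * m} \<and> r \<in> avoiding m (N - c div m)"
      using div_less_iff_less_mult[OF m, of c N] by (auto simp: avoiding_def)
    finally show ?thesis by (auto simp: Cons)
  qed
qed

lemma infsum_avoiding_first_part:
  fixes f :: "nat list \<Rightarrow> real"
  assumes m: "0 < m" and N: "0 < N" and f: "f summable_on {cs. is_factorization cs}"
  shows "infsum f (avoiding m N) =
    f [] + (\<Sum>c\<in>{1..<N * m}. infsum (\<lambda>cs. f (c # cs)) (avoiding m (N - c div m)))"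
proof -
  have factorizations: "(\<Union>c\<in>{1..<N * m}. Cons c ` avoiding m (N - c div m)) \<subseteq> {cs. is_factorization cs}"
    by (auto simp: avoiding_def is_factorization_def)
  have "infsum f (avoiding m N) = f [] + infsum f (\<Union>c\<in>{1..<N * m}. Cons c ` avoiding m (N - c div m))"
    unfolding avoiding_first_part[OF m N]
    by (rule infsum_insert[OF summable_on_subset_banach[OF f factorizations]]) auto
  also have "infsum f (\<Union>c\<in>{1..<N * m}. Cons c ` avoiding m (N - c div m)) =
      (\<Sum>c\<in>{1..<N * m}. infsum f (Cons c ` avoiding m (N - c div m)))"
    by (intro sum_infsum[symmetric] summable_on_subset_banach[OF f])
      (auto simp: avoiding_def is_factorization_def)
  also have "\<dots> = (\<Sum>c\<in>{1..<N * m}. infsum (\<lambda>cs. f (c # cs)) (avoiding m (N - c div m)))"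
    by (simp add: infsum_reindex comp_def)
  finally show ?thesis .
qed

lemma infsum_weight_avoiding:
  assumes m: "0 < m" and N: "0 < N" and "\<bar>x\<bar> \<le> 1/4" "\<bar>u\<bar> \<le> 1" "\<bar>v\<bar> \<le> 1"
  shows "infsum (factorization_weight x u v) (avoiding m N) =
    1 + u * (\<Sum>c\<in>{1..<N * m}. (v * x) ^ c * infsum (factorization_weight x u 1) (avoiding m (N - c div m)))"
  using assms
  by (simp add: infsum_avoiding_first_part[OF m N] summable_on_factorization_weight
      factorization_weight_Cons infsum_cmult_right' sum_distrib_left mult.assoc)

lemma infsum_weight_avoiding_convolution:
  assumes m: "0 < m" and N: "0 < N" and "\<bar>x\<bar> \<le> 1/4" "\<bar>u\<bar> \<le> 1" "\<bar>v\<bar> \<le> 1" and vx: "v * x \<noteq> 1"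
  defines "s \<equiv> \<lambda>k. infsum (factorization_weight x u 1) (avoiding m k)"
  shows "infsum (factorization_weight x u v) (avoiding m N) =
    1 + u * ((1 - (v * x) ^ m) / (1 - v * x) * (\<Sum>q<N. ((v * x) ^ m) ^ q * s (N - q)) - s N)"
proof -
  have "{..<N * m} = insert 0 {1..<N * m}"
    using m N by auto
  then have "(\<Sum>c\<in>{1..<N * m}. (v * x) ^ c * s (N - c div m))
      = (\<Sum>c<N * m. (v * x) ^ c * s (N - c div m)) - s N"
    by simp
  also have "\<dots> = (\<Sum>r<m. (v * x) ^ r) * (\<Sum>q<N. ((v * x) ^ m) ^ q * s (N - q)) - s N"
    by (simp only: sum_power_mult_div_blocks[where g = "\<lambda>q. s (N - q)"])
  also have "(\<Sum>r<m. (v * x) ^ r) = (1 - (v * x) ^ m) / (1 - v * x)"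
    using vx by (simp add: sum_gp_strict)
  finally show ?thesis
    unfolding s_def using infsum_weight_avoiding[OF m N assms(3-5)] by simp
qed

lemma small_parameters_nonzero:
  fixes x u v :: real
  assumes m: "0 < m" and x: "\<bar>x\<bar> < 1/4" and u: "\<bar>u\<bar> \<le> 1" and v: "\<bar>v\<bar> \<le> 1"
  shows "1 - x \<noteq> 0" "1 - x - u * x \<noteq> 0" "1 - x - u * (x - x ^ m) \<noteq> 0"
    and "v * x \<noteq> 1" "(v * x) ^ m \<noteq> 1"
proof -
  have power_le: "\<bar>t ^ m\<bar> \<le> \<bar>t\<bar>" if "\<bar>t\<bar> \<le> 1" for t :: real
    using power_decreasing[of 1 m "\<bar>t\<bar>"] m that by (simp add: power_abs)
  have scaled: "\<bar>c * t\<bar> \<le> \<bar>t\<bar>" if "\<bar>c\<bar> \<le> 1" for c t :: real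
    using that by (simp add: abs_mult mult_left_le_one_le)
  have "\<bar>x ^ m\<bar> \<le> \<bar>x\<bar>" "\<bar>u * x\<bar> \<le> \<bar>x\<bar>" "\<bar>u * (x - x ^ m)\<bar> \<le> \<bar>x - x ^ m\<bar>"
    using x u by (auto intro!: power_le scaled)
  moreover have "\<bar>v * x\<bar> < 1" "\<bar>(v * x) ^ m\<bar> < 1"
    using scaled[OF v, of x] power_le[of "v * x"] x by linarith+
  ultimately show "1 - x \<noteq> 0" "1 - x - u * x \<noteq> 0" "1 - x - u * (x - x ^ m) \<noteq> 0"
    and "v * x \<noteq> 1" "(v * x) ^ m \<noteq> 1"
    using x by (auto simp: abs_le_iff abs_less_iff)
qed

lemma infsum_avoiding_closed_form:
  fixes m N :: nat and x u :: real
  defines "p \<equiv> 1 - x - u * x" and "r \<equiv> 1 - x - u * (x - x ^ m)"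
  defines "z \<equiv> x ^ m + u * x ^ m * (1 - x ^ m) / r"
  assumes m: "0 < m" and N: "0 < N" and x: "\<bar>x\<bar> < 1/4" and u: "\<bar>u\<bar> \<le> 1"
  shows "infsum (factorization_weight x u 1) (avoiding m N) =
    (1 - x) / p + ((1 - x) / r - (1 - x) / p) * z ^ (N - 1)"
proof -
  note nonzero = small_parameters_nonzero[OF m x u abs_one[THEN eq_refl]]
  have x': "\<bar>x\<bar> \<le> 1/4"
    using x by simp
  define s where "s N = infsum (factorization_weight x u 1) (avoiding m N)" for N
  have "s N = 1 + u * ((1 - x ^ m) / (1 - x) * (\<Sum>q<N. (x ^ m) ^ q * s (N - q)) - s N)"
    if "0 < N" for N
    using infsum_weight_avoiding_convolution[OF m that x' u, of 1] nonzero(1)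
    by (simp add: s_def)
  from recurrence_closed_form[OF this nonzero(1) nonzero(3) nonzero(2) N]
  show ?thesis
    unfolding s_def p_def r_def z_def .
qed

lemma infsum_weight_avoiding_closed_form:
  fixes m n :: nat and x u v :: real
  defines "z \<equiv> x ^ m + u * x ^ m * (1 - x ^ m) / (1 - x - u * (x - x ^ m))"
  assumes m: "0 < m" and n: "0 < n" and x: "\<bar>x\<bar> < 1/4" and u: "\<bar>u\<bar> \<le> 1" and v: "\<bar>v\<bar> \<le> 1"
    and zw: "z \<noteq> (v * x) ^ m"
  shows "infsum (factorization_weight x u v) (avoiding m n) =
    1 + ((1 - x) / ((1 - v * x) * (1 - x - u * x))) *
         (u * (v * x - (v * x) ^ (m * n)) +
          u ^ 2 * x ^ m *
            ((1 - v * x) * (z - (v * x) ^ m) * z ^ (n - 1)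
             - (1 - (v * x) ^ m) * (z ^ n - (v * x) ^ (m * n)))
          / ((z - (v * x) ^ m) * (1 - x - u * (x - x ^ m))))"
proof -
  note nonzero = small_parameters_nonzero[OF m x u v]
  define P where "P = (1 - x) / (1 - x - u * x)"
  define D where "D = (1 - x) / (1 - x - u * (x - x ^ m)) - (1 - x) / (1 - x - u * x)"
  define s where "s N = infsum (factorization_weight x u 1) (avoiding m N)" for N
  have s_closed: "s N = P + D * z ^ (N - 1)" if "0 < N" for N
    unfolding s_def P_def D_def z_def using infsum_avoiding_closed_form[OF m that x u] .
  have conv: "(\<Sum>q<n. ((v * x) ^ m) ^ q * s (n - q)) =
      P * (1 - ((v * x) ^ m) ^ n) / (1 - (v * x) ^ m) + D * (z ^ n - ((v * x) ^ m) ^ n) / (z - (v * x) ^ m)"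
    by (rule convolution_closed_form[OF s_closed nonzero(5) zw])
  have zn: "z ^ n = z * z ^ (n - 1)"
    using n by (cases n) auto
  have D_eq: "D = - ((1 - x) * u * x ^ m) / ((1 - x - u * (x - x ^ m)) * (1 - x - u * x))"
    unfolding D_def using nonzero by (simp add: field_simps)
  have "infsum (factorization_weight x u v) (avoiding m n) =
      1 + u * ((1 - (v * x) ^ m) / (1 - v * x) * (\<Sum>q<n. ((v * x) ^ m) ^ q * s (n - q)) - s n)"
    using infsum_weight_avoiding_convolution[OF m n _ u v nonzero(4)] x by (simp add: s_def)
  also have "\<dots> = 1 + u * ((1 - (v * x) ^ m) / (1 - v * x) *
        (P * (1 - ((v * x) ^ m) ^ n) / (1 - (v * x) ^ m) + D * (z * z ^ (n - 1) - ((v * x) ^ m) ^ n) / (z - (v * x) ^ m))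
        - (P + D * z ^ (n - 1)))"
    unfolding conv s_closed[OF n] zn ..
  also have "\<dots> = 1 + ((1 - x) / ((1 - v * x) * (1 - x - u * x))) *
         (u * (v * x - ((v * x) ^ m) ^ n) +
          u ^ 2 * x ^ m *
            ((1 - v * x) * (z - (v * x) ^ m) * z ^ (n - 1)
             - (1 - (v * x) ^ m) * (z * z ^ (n - 1) - ((v * x) ^ m) ^ n))
          / ((z - (v * x) ^ m) * (1 - x - u * (x - x ^ m))))"
    unfolding P_def D_eq by (rule closed_form_regroup) (use nonzero zw in auto)
  finally show ?thesis
    unfolding power_mult zn .
qed

theorem lemma5p1:
  fixes m n :: nat and x u v :: real
  assumes "1 \<le> m" and "1 \<le> n"
    and "\<bar>x\<bar> < 1/4" and "\<bar>u\<bar> \<le> 1" and "\<bar>v\<bar> \<le> 1"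
    and "x ^ m + u * x ^ m * (1 - x ^ m) / (1 - x - u * (x - x ^ m)) \<noteq> (v * x) ^ m"
  shows "let z = x ^ m + u * x ^ m * (1 - x ^ m) / (1 - x - u * (x - x ^ m)) in
    ((\<lambda>cs. x ^ len cs * u ^ parts cs * v ^ fst_part cs) has_sum
      (1 + ((1 - x) / ((1 - v * x) * (1 - x - u * x))) *
         (u * (v * x - (v * x) ^ (m * n)) +
          u ^ 2 * x ^ m *
            ((1 - v * x) * (z - (v * x) ^ m) * z ^ (n - 1)
             - (1 - (v * x) ^ m) * (z ^ n - (v * x) ^ (m * n)))
          / ((z - (v * x) ^ m) * (1 - x - u * (x - x ^ m))))))
    {cs. is_factorization cs \<and> avoids_runs m n cs}"
proof -
  have m: "0 < m" and n: "0 < n"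
    using assms(1,2) by auto
  have avoiding: "{cs. is_factorization cs \<and> avoids_runs m n cs} = avoiding m n"
    using avoids_runs_iff_run_capacity_less[OF m] by (auto simp: avoiding_def)
  have "factorization_weight x u v summable_on avoiding m n"
    using summable_on_subset_banach[OF summable_on_factorization_weight avoiding_subset_factorizations]
      assms(3-5) by simp
  then have "(factorization_weight x u v has_sum infsum (factorization_weight x u v) (avoiding m n))
      (avoiding m n)"
    by simp
  from this[unfolded infsum_weight_avoiding_closed_form[OF m n assms(3-6)]] show ?thesis
    unfolding avoiding Let_def factorization_weight_def[abs_def] .
qed

end
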